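(* For each positive integer $\delta$, the polynomials $$P_{2\delta-1}(A,B,C)=(-1)^\delta A\,\mathrm{Poly}_{\delta-1,\delta,\delta-1}(A,B)\mathrm{Poly}_{\delta-1,\delta,\delta-1}(A,C)+B\,\mathrm{Poly}_{\delta-1,\delta,\delta-1}(B,A)\mathrm{Poly}_{\delta-1,\delta,\delta-1}(A,C)+C\,\mathrm{Poly}_{\delta-1,\delta,\delta-1}(A,B)\mathrm{Poly}_{\delta-1,\delta,\delta-1}(C,A)+(-1)^{\delta+1}\tbinom{2\delta}{\delta}\tbinom{3\delta-1}{\delta-1}A^{2\delta-1}$$ and $$P_{2\delta}(A,B,C)=(-1)^{\delta+1}\mathrm{Poly}_{\delta,\delta,\delta}(A,B)\mathrm{Poly}_{\delta,\delta,\delta}(A,C)+B\,\mathrm{Poly}_{\delta-1,\delta,\delta}(B,A)\mathrm{Poly}_{\delta,\delta,\delta}(A,C)+C\,\mathrm{Poly}_{\delta,\delta,\delta}(A,B)\mathrm{Poly}_{\delta-1,\delta,\delta}(C,A)+(-1)^\delta\tbinom{2\delta}{\delta}\tbinom{3\delta}{\delta}A^{2\delta}$$ both lie in the ideal $(A+B+C)\mathbb Z[A,B,C]$.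
   Context: For non-negative integers $d,a,b$, $\mathrm{Poly}_{d,a,b}(A,B)=\sum_{i=0}^d(-1)^i\binom{a+d-i}{a}\binom{b+i}{b}A^{d-i}B^i\in\mathbb Z[A,B]$. *)

theory Defs
  imports "HOL-Computational_Algebra.Polynomial"
begin

definition polyDab :: "nat \<Rightarrow> nat \<Rightarrow> nat \<Rightarrow> 'r::comm_ring_1 \<Rightarrow> 'r \<Rightarrow> 'r" where
  "polyDab d a b X Y = (\<Sum>i=0..d. (-1)^i * of_nat ((a+d-i) choose a) * of_nat ((b+i) choose b)
                                   * X^(d-i) * Y^i)"

text \<open>Z[A,B,C] is realised as ((Z[A])[B])[C], i.e. the type int poly poly poly.\<close>
type_synonym zABC = "int poly poly poly"

definition varA :: zABC where "varA = [:[:[:0, 1:]:]:]"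
definition varB :: zABC where "varB = [:[:0, 1:]:]"
definition varC :: zABC where "varC = [:0, 1:]"

definition P_odd :: "nat \<Rightarrow> zABC" where
  "P_odd \<delta> = (let A = varA; B = varB; C = varC; Q = polyDab (\<delta>-1) \<delta> (\<delta>-1) in
     (-1)^\<delta> * A * Q A B * Q A C + B * Q B A * Q A C + C * Q A B * Q C A
     + (-1)^(\<delta>+1) * of_nat ((2*\<delta>) choose \<delta>) * of_nat ((3*\<delta>-1) choose (\<delta>-1)) * A^(2*\<delta>-1))"

definition P_even :: "nat \<Rightarrow> zABC" where
  "P_even \<delta> = (let A = varA; B = varB; C = varC; Q = polyDab \<delta> \<delta> \<delta>;
                    R = polyDab (\<delta>-1) \<delta> \<delta> in
     (-1)^(\<delta>+1) * Q A B * Q A C + B * R B A * Q A C + C * Q A B * R C A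
     + (-1)^\<delta> * of_nat ((2*\<delta>) choose \<delta>) * of_nat ((3*\<delta>) choose \<delta>) * A^(2*\<delta>))"

end

theory Submission
  imports Defs "HOL-Computational_Algebra.Fraction_Field"
begin

text \<open>
  Both polynomials are homogeneous, so it suffices to show that they vanish at \<open>(1, -t, -(1-t))\<close>
  for an indeterminate \<open>t\<close> (the line \<open>A + B + C = 0\<close> dehomogenised at \<open>A = 1\<close>).  With
  \<open>\<delta> = p + 1\<close> and \<open>b \<in> {p, p + 1}\<close> the values \<open>Poly(1,-t)\<close> and \<open>-t Poly(-t,1)\<close> are
  expressed through two polynomials: the hypergeometric polynomial \<open>F\<^sub>b(t) = \<Sum>\<^sub>k f\<^sub>k t\<^sup>k\<close>
  with \<open>f\<^sub>k = C(p+1+b-k, b) C(p+k, p)\<close> and its "dual" \<open>S\<^sub>b\<close>, with \<open>t F\<^sub>b' = (p+1) S\<^sub>b\<close>.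
  The whole theorem then reduces to the reflection identity
    \<open>F\<^sub>b(t) F\<^sub>b(1-t) - S\<^sub>b(t) S\<^sub>b(1-t) = F\<^sub>b(0) F\<^sub>b(1)\<close>.
  It holds because \<open>F\<^sub>b\<close> solves the hypergeometric equation \<open>x(1-x)W'' + (c-x)W' + D W = 0\<close>,
  for which \<open>D W(x) W(1-x) - x(1-x) W'(x) W'(1-x)\<close> is constant (a Wronskian-type argument).
\<close>

definition hyp_ode :: "'a::idom \<Rightarrow> 'a \<Rightarrow> 'a poly \<Rightarrow> bool" where
  "hyp_ode c D W \<longleftrightarrow> [:0, 1, -1:] * pderiv (pderiv W) + [:c, -1:] * pderiv W + smult D W = 0"

(* For a solution W, the "reflected Wronskian" D W(x) W(1-x) - x(1-x) W'(x) W'(1-x) has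
   zero derivative, so it is constant; evaluating at 0 gives its value. *)
lemma wronskian_reflection:
  fixes W :: "'a::{idom,ring_char_0} poly"
  assumes "hyp_ode c D W"
  shows "D * poly W x * poly W (1 - x) - x * (1 - x) * poly (pderiv W) x * poly (pderiv W) (1 - x)
       = D * poly W 0 * poly W 1"
proof -
  define X :: "'a poly" where "X = [:0, 1:]"
  define Y :: "'a poly" where "Y = [:1, -1:]"
  define W1 where "W1 = pderiv W"
  define W2 where "W2 = pderiv W1"
  have XY: "X * Y = [:0, 1, -1:]" "Y = 1 - X" "pcompose X Y = Y" "pcompose Y Y = X"
    by (simp_all add: X_def Y_def one_pCons pcompose_pCons)
  have "[:c, -1:] = [:c:] - X" by (simp add: X_def)
  with assms have ode: "X * Y * W2 + ([:c:] - X) * W1 + smult D W = 0"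
    unfolding hyp_ode_def W2_def W1_def XY(1) by simp
  have ode_refl: "Y * X * pcompose W2 Y + ([:c:] - Y) * pcompose W1 Y + smult D (pcompose W Y) = 0"
    using arg_cong[OF ode, of "\<lambda>p. pcompose p Y"]
    by (simp add: pcompose_diff pcompose_add pcompose_mult pcompose_smult XY(3,4))
  have dX: "pderiv X = 1" and dY: "pderiv Y = -1" by (simp_all add: X_def Y_def pderiv_pCons one_pCons)
  have dW: "pderiv (pcompose W Y) = - pcompose W1 Y" "pderiv (pcompose W1 Y) = - pcompose W2 Y"
    by (simp_all add: pderiv_pcompose dY W1_def W2_def)
  define G where "G = smult D (W * pcompose W Y) - X * Y * W1 * pcompose W1 Y"
  have "pderiv G = smult D (W * pderiv (pcompose W Y) + pcompose W Y * W1)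
      - (X * Y * W1 * pderiv (pcompose W1 Y)
         + pcompose W1 Y * (X * Y * W2 + W1 * (X * pderiv Y + Y * pderiv X)))"
    unfolding G_def W2_def W1_def by (simp only: pderiv_diff pderiv_smult pderiv_mult)
  also have "\<dots> = W1 * (Y * X * pcompose W2 Y + ([:c:] - Y) * pcompose W1 Y + smult D (pcompose W Y))
                   - pcompose W1 Y * (X * Y * W2 + ([:c:] - X) * W1 + smult D W)"
    unfolding dX dY dW by (simp add: XY(2) algebra_simps smult_diff_right)
  also have "\<dots> = 0" using ode ode_refl by simp
  finally have "degree G = 0" by (simp add: pderiv_eq_0_iff)
  then obtain k where "G = [:k:]" by (rule degree_eq_zeroE)
  hence "poly G x = poly G 0" by simp
  thus ?thesis by (simp add: G_def W1_def X_def Y_def poly_pcompose algebra_simps)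
qed

lemma hyp_ode_of_recurrence:
  fixes W :: "'a::{idom,ring_char_0} poly" and w :: "nat \<Rightarrow> nat"
  assumes coeff_W: "\<And>n. coeff W n = of_nat (w n)"
    and rec: "\<And>n. (n+1)*(n+1)*w(n+1) + D*w n = (n+1)*m*w(n+1) + n*n*w n"
  shows "hyp_ode (1 - of_nat m) (of_nat D) W"
proof -
  have "coeff ([:0, 1, -1:] * pderiv (pderiv W) + [:1 - of_nat m, -1:] * pderiv W + smult (of_nat D) W) n
        = of_nat ((n+1)*(n+1)*w(n+1) + D*w n) - of_nat ((n+1)*m*w(n+1) + n*n*w n)" for n
  proof -
    consider "n = 0" | k where "n = Suc k" by (cases n) auto
    then show ?thesis
    proof cases
      case 1
      then show ?thesis by (simp add: coeff_pderiv coeff_W algebra_simps)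
    next
      case 2
      then show ?thesis by (cases k) (simp_all add: coeff_pderiv coeff_W algebra_simps)
    qed
  qed
  then show ?thesis unfolding hyp_ode_def by (intro poly_eqI) (simp only: rec diff_self coeff_0)
qed

lemma sum_reflect:
  fixes x :: "'a::comm_semiring_1"
  shows "(\<Sum>k\<le>d. c (d - k) * x^k) = (\<Sum>i\<le>d. c i * x^(d - i))"
proof -
  have "(\<Sum>i\<le>d. c i * x^(d - i)) = (\<Sum>i<Suc d. c (Suc d - Suc i) * x^(d - (Suc d - Suc i)))"
    unfolding lessThan_Suc_atMost[symmetric] by (rule sum.nat_diff_reindex[symmetric])
  also have "\<dots> = (\<Sum>k\<le>d. c (d - k) * x^k)"
    by (intro sum.cong) (auto simp: lessThan_Suc_atMost)
  finally show ?thesis by simp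
qed

lemma euler_operator_sum:
  fixes x :: "'a::idom"
  shows "x * poly (pderiv (\<Sum>k\<le>d. monom (a k) k)) x = (\<Sum>k\<le>d. of_nat k * a k * x^k)"
proof -
  have "x * poly (pderiv (monom (a k) k)) x = of_nat k * a k * x^k" for k
    by (cases k) (simp_all add: pderiv_monom poly_monom algebra_simps)
  then show ?thesis by (simp add: higher_pderiv_sum[of 1, simplified] poly_sum sum_distrib_left)
qed

(* If the coefficients f_k of F (degree <= d) satisfy the
   hypergeometric recurrence and k f_k = d s_(d-k), then x F'(x) = d S(x) with S the reversed
   polynomial of s, and the Wronskian constant becomes F(t)F(1-t) - S(t)S(1-t) = F(0)F(1). *)
lemma reflection_identity:
  fixes f s :: "nat \<Rightarrow> nat" and t :: "'a::{idom,ring_char_0}"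
  assumes vanish: "\<And>k. d < k \<Longrightarrow> f k = 0"
    and rec: "\<And>n. (n+1)*(n+1)*f(n+1) + d*d*f n = (n+1)*m*f(n+1) + n*n*f n"
    and euler: "\<And>k. k \<le> d \<Longrightarrow> k * f k = d * s (d - k)"
    and "0 < d"
  defines "F \<equiv> \<lambda>x. \<Sum>k\<le>d. of_nat (f k) * x^k"
    and "S \<equiv> \<lambda>x. \<Sum>i\<le>d. of_nat (s i) * x^(d - i)"
  shows "F t * F (1 - t) - S t * S (1 - t) = of_nat (f 0) * F 1"
proof -
  define W :: "'a poly" where "W = (\<Sum>k\<le>d. monom (of_nat (f k)) k)"
  have "coeff W n = of_nat (f n)" for n
    using vanish[of n] by (auto simp: W_def coeff_sum)
  then have "hyp_ode (1 - of_nat m) (of_nat (d * d)) W"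
    using rec by (rule hyp_ode_of_recurrence)
  then have wr: "of_nat (d * d) * poly W t * poly W (1 - t)
      - t * (1 - t) * poly (pderiv W) t * poly (pderiv W) (1 - t) = of_nat (d * d) * poly W 0 * poly W 1"
    by (rule wronskian_reflection)
  have poly_W: "poly W x = F x" for x
    by (simp add: W_def F_def poly_sum poly_monom)
  have "F 0 = (\<Sum>k\<le>d. if k = 0 then of_nat (f 0) else 0)"
    unfolding F_def by (rule sum.cong) (auto simp: power_0_left)
  then have F_0: "F 0 = of_nat (f 0)" by simp
  have euler_W: "x * poly (pderiv W) x = of_nat d * S x" for x
  proof -
    have "x * poly (pderiv W) x = (\<Sum>k\<le>d. of_nat d * (of_nat (s (d - k)) * x^k))"
      unfolding W_def euler_operator_sum
      by (rule sum.cong) (simp_all add: euler flip: of_nat_mult mult.assoc)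
    also have "\<dots> = of_nat d * S x"
      by (simp add: S_def sum_reflect[of "\<lambda>i. of_nat (s i)"] flip: sum_distrib_left)
    finally show ?thesis .
  qed
  have "t * (1 - t) * poly (pderiv W) t * poly (pderiv W) (1 - t)
      = (t * poly (pderiv W) t) * ((1 - t) * poly (pderiv W) (1 - t))"
    by (simp only: ac_simps)
  also have "\<dots> = of_nat (d * d) * (S t * S (1 - t))"
    by (simp only: euler_W of_nat_mult ac_simps)
  finally have "of_nat (d * d) * F t * F (1 - t) - of_nat (d * d) * (S t * S (1 - t))
      = of_nat (d * d) * F 0 * F 1"
    using wr unfolding poly_W by simp
  then have "of_nat (d * d) * (F t * F (1 - t) - S t * S (1 - t)) = of_nat (d * d) * (of_nat (f 0) * F 1)"
    by (simp only: right_diff_distrib mult.assoc F_0)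
  moreover have "of_nat (d * d) \<noteq> (0 :: 'a)" using \<open>0 < d\<close> by simp
  ultimately show ?thesis by simp
qed

lemma choose_upper_convolution:
  "(\<Sum>j\<le>N. (j choose p) * ((N - j) choose q)) = Suc N choose (p + q + 1)"
proof (induction N arbitrary: q)
  case 0
  then show ?case by (cases p; cases q) auto
next
  case (Suc N)
  show ?case
  proof (cases q)
    case 0
    then show ?thesis by (simp add: sum_choose_upper del: binomial_Suc_Suc)
  next
    case (Suc q')
    have "(\<Sum>j\<le>Suc N. (j choose p) * ((Suc N - j) choose q))
        = (\<Sum>j\<le>N. (j choose p) * ((N - j) choose q') + (j choose p) * ((N - j) choose q))"
      using Suc by (simp add: Suc_diff_le algebra_simps)
    also have "\<dots> = (Suc N choose (p + q' + 1)) + (Suc N choose (p + q + 1))"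
      by (simp add: sum.distrib Suc.IH)
    also have "\<dots> = Suc (Suc N) choose (p + q + 1)" using Suc by simp
    finally show ?thesis .
  qed
qed

lemma choose_absorb_top: "Suc m * (Suc (k + m) choose k) = Suc (k + m) * ((k + m) choose k)"
  using binomial_absorb_comp[of "Suc (k + m)" k] by simp

lemma choose_absorb_bottom: "Suc p * ((p + k) choose Suc p) = k * ((p + k) choose p)"
  using binomial_absorption[of p "p + k"] binomial_absorb_comp[of "p + k" p] by simp

(* The i-th coefficient of Poly_{d,a,b}(1, -t) as a polynomial in t. *)
definition dab_coeff :: "nat \<Rightarrow> nat \<Rightarrow> nat \<Rightarrow> nat \<Rightarrow> nat" where
  "dab_coeff d a b i = ((a + d - i) choose a) * ((b + i) choose b)"

lemma dab_coeff_eq_0: "d < i \<Longrightarrow> 0 < a \<Longrightarrow> dab_coeff d a b i = 0"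
  by (simp add: dab_coeff_def)

definition hyp_coeff :: "nat \<Rightarrow> nat \<Rightarrow> nat \<Rightarrow> nat" where
  "hyp_coeff p b k = (if k \<le> Suc p then ((Suc p + b - k) choose b) * ((p + k) choose p) else 0)"

(* The ratio f_(n+1) / f_n = (p+1-n)(p+1+n) / ((n+1)(p+1+b-n)), as a recurrence. *)
lemma hyp_coeff_recurrence:
  "(n+1)*(n+1)*hyp_coeff p b (n+1) + Suc p*Suc p*hyp_coeff p b n
     = (n+1)*(p+b+2)*hyp_coeff p b (n+1) + n*n*hyp_coeff p b n"
proof (cases "n \<le> p")
  case True
  then obtain r where p: "p = n + r" using le_Suc_ex by blast
  define X where "X = ((b + r) choose b) * (Suc (n + r + n) choose (n + r))"
  define Y where "Y = (Suc (b + r) choose b) * ((n + r + n) choose (n + r))"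
  have coeffs: "hyp_coeff p b (n+1) = X" "hyp_coeff p b n = Y"
    unfolding hyp_coeff_def X_def Y_def p by (simp_all add: ac_simps Suc_diff_le)
  have "Suc n * Suc (b + r) * X
      = (Suc (b + r) * ((b + r) choose b)) * (Suc n * (Suc (n + r + n) choose (n + r)))"
    by (simp only: X_def ac_simps)
  also have "\<dots> = (Suc r * (Suc (b + r) choose b)) * (Suc (n + r + n) * ((n + r + n) choose (n + r)))"
    by (simp only: choose_absorb_top)
  also have "\<dots> = Suc r * Suc (n + r + n) * Y"
    by (simp only: Y_def ac_simps)
  finally have ratio: "Suc n * Suc (b + r) * X = Suc r * Suc (n + r + n) * Y" .
  have "(n+1)*(n+1)*X + Suc p*Suc p*Y = (n+1)*(n+1)*X + n*n*Y + Suc r * Suc (n + r + n) * Y"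
    by (simp add: p algebra_simps)
  also have "\<dots> = (n+1)*(n+1)*X + n*n*Y + Suc n * Suc (b + r) * X"
    by (simp only: ratio)
  also have "\<dots> = (n+1)*(p+b+2)*X + n*n*Y"
    by (simp add: p algebra_simps)
  finally show ?thesis unfolding coeffs .
qed (auto simp: hyp_coeff_def le_Suc_eq)

lemma hyp_coeff_euler:
  assumes "k \<le> Suc p"
  shows "k * hyp_coeff p b k = Suc p * dab_coeff p (Suc p) b (Suc p - k)"
proof -
  have "k * hyp_coeff p b k = (k * ((p + k) choose p)) * ((Suc p + b - k) choose b)"
    using assms by (simp only: hyp_coeff_def if_True ac_simps)
  also have "\<dots> = Suc p * (((p + k) choose Suc p) * ((Suc p + b - k) choose b))"
    by (simp only: mult.assoc[symmetric] choose_absorb_bottom)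
  also have "((p + k) choose Suc p) * ((Suc p + b - k) choose b) = dab_coeff p (Suc p) b (Suc p - k)"
  proof -
    have "Suc p + p - (Suc p - k) = p + k" "b + (Suc p - k) = Suc p + b - k" using assms by auto
    then show ?thesis by (simp only: dab_coeff_def)
  qed
  finally show ?thesis .
qed

lemma hyp_coeff_sum: "(\<Sum>k\<le>Suc p. hyp_coeff p b k) = (2*p + b + 2) choose Suc p"
proof -
  define g where "g j = (j choose p) * ((2*p + 1 + b - j) choose b)" for j
  have "(\<Sum>k\<le>Suc p. hyp_coeff p b k) = (\<Sum>k\<in>{0..Suc p}. g (k + p))"
    by (rule sum.cong) (auto simp: hyp_coeff_def g_def add.commute)
  also have "\<dots> = (\<Sum>j\<in>{0 + p..Suc p + p}. g j)"
    by (rule sum.shift_bounds_cl_nat_ivl[symmetric])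
  also have "\<dots> = (\<Sum>j\<le>2*p + 1 + b. g j)"
    by (rule sum.mono_neutral_left) (auto simp: g_def binomial_eq_0)
  also have "\<dots> = Suc (2*p + 1 + b) choose (p + b + 1)"
    unfolding g_def by (rule choose_upper_convolution)
  also have "\<dots> = (2*p + b + 2) choose Suc p"
    using binomial_symmetric[of "Suc p" "2*p + b + 2"] by simp
  finally show ?thesis .
qed

(* The hypergeometric polynomial F_b and its dual S_b(x) = x^(p+1) Poly_{p,p+1,b}(1,-1/x). *)
definition hyp_poly :: "nat \<Rightarrow> nat \<Rightarrow> 'a::comm_ring_1 \<Rightarrow> 'a" where
  "hyp_poly p b x = (\<Sum>k\<le>Suc p. of_nat (hyp_coeff p b k) * x^k)"

definition dual_poly :: "nat \<Rightarrow> nat \<Rightarrow> 'a::comm_ring_1 \<Rightarrow> 'a" where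
  "dual_poly p b x = (\<Sum>i\<le>p. of_nat (dab_coeff p (Suc p) b i) * x^(Suc p - i))"

lemma dual_poly_extend:
  "dual_poly p b x = (\<Sum>i\<le>Suc p. of_nat (dab_coeff p (Suc p) b i) * x^(Suc p - i))"
  by (simp add: dual_poly_def dab_coeff_eq_0)

lemma hyp_reflection:
  fixes t :: "'a::{idom,ring_char_0}"
  shows "hyp_poly p b t * hyp_poly p b (1 - t) - dual_poly p b t * dual_poly p b (1 - t)
       = of_nat ((Suc p + b) choose b) * of_nat ((2*p + b + 2) choose Suc p)"
proof -
  have "hyp_poly p b t * hyp_poly p b (1 - t) - dual_poly p b t * dual_poly p b (1 - t)
      = of_nat (hyp_coeff p b 0) * hyp_poly p b 1"
    unfolding dual_poly_extend hyp_poly_def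
  proof (rule reflection_identity[where m = "p + b + 2"])
    show "hyp_coeff p b k = 0" if "Suc p < k" for k
      using that by (simp add: hyp_coeff_def)
    show "(n+1)*(n+1)*hyp_coeff p b (n+1) + Suc p*Suc p*hyp_coeff p b n
        = (n+1)*(p+b+2)*hyp_coeff p b (n+1) + n*n*hyp_coeff p b n" for n
      by (rule hyp_coeff_recurrence)
  qed (simp_all add: hyp_coeff_euler)
  also have "\<dots> = of_nat ((Suc p + b) choose b) * of_nat ((2*p + b + 2) choose Suc p)"
  proof -
    have "hyp_poly p b (1::'a) = of_nat (\<Sum>k\<le>Suc p. hyp_coeff p b k)"
      unfolding hyp_poly_def by (simp only: of_nat_sum power_one mult_1_right)
    then show ?thesis by (simp only: hyp_coeff_sum) (simp add: hyp_coeff_def)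
  qed
  finally show ?thesis .
qed

lemma polyDab_one_neg:
  "polyDab d a b 1 (-t) = (\<Sum>i\<le>d. of_nat (dab_coeff d a b i) * (t::'a::comm_ring_1)^i)"
  unfolding polyDab_def atLeast0AtMost
proof (rule sum.cong)
  fix i
  have "(-1)^i * of_nat ((a + d - i) choose a) * of_nat ((b + i) choose b) * 1^(d - i) * (-t)^i
      = ((-1)^i * (-t)^i) * of_nat (dab_coeff d a b i)"
    by (simp only: dab_coeff_def of_nat_mult power_one mult_1_right mult_1_left ac_simps)
  also have "(-1)^i * (-t)^i = t^i" by (simp flip: power_mult_distrib)
  finally show "(-1)^i * of_nat ((a + d - i) choose a) * of_nat ((b + i) choose b) * 1^(d - i) * (-t)^i
      = of_nat (dab_coeff d a b i) * t^i"
    by (simp only: ac_simps)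
qed simp

lemma polyDab_neg_one:
  "(-t) * polyDab d a b (-t) 1
     = (-1)^(d+1) * (\<Sum>i\<le>d. of_nat (dab_coeff d a b i) * (t::'a::comm_ring_1)^(d + 1 - i))"
  unfolding polyDab_def atLeast0AtMost sum_distrib_left
proof (rule sum.cong)
  fix i assume "i \<in> {..d}"
  then have exps: "d + 1 - i = Suc (d - i)" "i + (d + 1 - i) = d + 1" by auto
  have "(-1)^i * ((-t)^(d - i) * (-t)) = (-1)^i * (-t)^(d + 1 - i)"
    by (simp only: exps(1) power_Suc2)
  also have "\<dots> = (-1)^(i + (d + 1 - i)) * t^(d + 1 - i)"
    by (simp only: power_minus[of t] power_add mult.assoc)
  finally have sign: "(-1)^i * ((-t)^(d - i) * (-t)) = (-1)^(d + 1) * t^(d + 1 - i)"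
    by (simp only: exps(2))
  have "(-t) * ((-1)^i * of_nat ((a + d - i) choose a) * of_nat ((b + i) choose b) * (-t)^(d - i) * 1^i)
      = ((-1)^i * ((-t)^(d - i) * (-t))) * of_nat (dab_coeff d a b i)"
    by (simp only: dab_coeff_def of_nat_mult power_one mult_1_right mult_1_left ac_simps)
  also have "\<dots> = (-1)^(d + 1) * (of_nat (dab_coeff d a b i) * t^(d + 1 - i))"
    unfolding sign by (simp only: ac_simps)
  finally show "(-t) * ((-1)^i * of_nat ((a + d - i) choose a) * of_nat ((b + i) choose b) * (-t)^(d - i) * 1^i)
      = (-1)^(d + 1) * (of_nat (dab_coeff d a b i) * t^(d + 1 - i))" .
qed simp

lemma dual_poly_reflected:
  "dual_poly p b x = (\<Sum>k\<le>Suc p. of_nat (dab_coeff p (Suc p) b (Suc p - k)) * x^k)"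
  unfolding dual_poly_extend by (rule sum_reflect[symmetric])

lemma polyDab_neg_one_dual:
  "(-x) * polyDab p (Suc p) b (-x) 1 = (-1)^Suc p * dual_poly p b x"
  by (simp only: polyDab_neg_one dual_poly_def Suc_eq_plus1)

lemma polyDab_one_neg_extend:
  "polyDab p (Suc p) b 1 (-x) = (\<Sum>k\<le>Suc p. of_nat (dab_coeff p (Suc p) b k) * x^k)"
  by (simp add: polyDab_one_neg dab_coeff_eq_0)

(* Odd case: F_p is Poly_{p,p+1,p}(1,-t) plus the dual polynomial S_p. *)
lemma hyp_coeff_split_odd:
  assumes "k \<le> Suc p"
  shows "hyp_coeff p p k = dab_coeff p (Suc p) p k + dab_coeff p (Suc p) p (Suc p - k)"
proof -
  define r where "r = Suc p - k"
  with assms have r: "k + r = Suc p" by simp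
  then have exps: "Suc p + p - k = p + r" "Suc p + p - (Suc p - k) = p + k" "p + (Suc p - k) = p + r"
    by auto
  define X where "X = (p + r) choose p"
  define Y where "Y = (p + k) choose p"
  have "Suc p * (dab_coeff p (Suc p) p k + dab_coeff p (Suc p) p (Suc p - k))
      = (Suc p * ((p + r) choose Suc p)) * Y + (Suc p * ((p + k) choose Suc p)) * X"
    unfolding dab_coeff_def exps X_def Y_def by (simp only: distrib_left ac_simps)
  also have "\<dots> = (r * X) * Y + (k * Y) * X"
    by (simp only: choose_absorb_bottom X_def Y_def)
  also have "\<dots> = Suc p * (X * Y)"
    by (simp only: r[symmetric] algebra_simps)
  also have "X * Y = hyp_coeff p p k"
    using assms unfolding hyp_coeff_def exps X_def Y_def by simp
  finally show ?thesis by (metis nat_mult_eq_cancel1 zero_less_Suc)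
qed

(* Even case: Poly_{p+1,p+1,p+1}(1,-t) is F_(p+1) plus the dual polynomial S_(p+1). *)
lemma dab_coeff_split_even:
  assumes "k \<le> Suc p"
  shows "dab_coeff (Suc p) (Suc p) (Suc p) k = hyp_coeff p (Suc p) k + dab_coeff p (Suc p) (Suc p) (Suc p - k)"
proof -
  have exps: "Suc p + p - (Suc p - k) = p + k" "Suc p + (Suc p - k) = Suc p + Suc p - k"
    using assms by auto
  have pascal: "(Suc p + k) choose Suc p = ((p + k) choose p) + ((p + k) choose Suc p)"
    by simp
  show ?thesis
    unfolding dab_coeff_def hyp_coeff_def if_P[OF assms] exps pascal
    by (simp only: add_mult_distrib2 ac_simps)
qed

definition odd_form :: "nat \<Rightarrow> 'r::comm_ring_1 \<Rightarrow> 'r \<Rightarrow> 'r \<Rightarrow> 'r" where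
  "odd_form \<delta> A B C =
     (-1)^\<delta> * A * polyDab (\<delta>-1) \<delta> (\<delta>-1) A B * polyDab (\<delta>-1) \<delta> (\<delta>-1) A C
     + B * polyDab (\<delta>-1) \<delta> (\<delta>-1) B A * polyDab (\<delta>-1) \<delta> (\<delta>-1) A C
     + C * polyDab (\<delta>-1) \<delta> (\<delta>-1) A B * polyDab (\<delta>-1) \<delta> (\<delta>-1) C A
     + (-1)^(\<delta>+1) * of_nat ((2*\<delta>) choose \<delta>) * of_nat ((3*\<delta>-1) choose (\<delta>-1)) * A^(2*\<delta>-1)"

definition even_form :: "nat \<Rightarrow> 'r::comm_ring_1 \<Rightarrow> 'r \<Rightarrow> 'r \<Rightarrow> 'r" where
  "even_form \<delta> A B C =
     (-1)^(\<delta>+1) * polyDab \<delta> \<delta> \<delta> A B * polyDab \<delta> \<delta> \<delta> A C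
     + B * polyDab (\<delta>-1) \<delta> \<delta> B A * polyDab \<delta> \<delta> \<delta> A C
     + C * polyDab \<delta> \<delta> \<delta> A B * polyDab (\<delta>-1) \<delta> \<delta> C A
     + (-1)^\<delta> * of_nat ((2*\<delta>) choose \<delta>) * of_nat ((3*\<delta>) choose \<delta>) * A^(2*\<delta>)"

lemma P_odd_eq: "P_odd \<delta> = odd_form \<delta> varA varB varC"
  by (simp add: P_odd_def odd_form_def Let_def)

lemma P_even_eq: "P_even \<delta> = even_form \<delta> varA varB varC"
  by (simp add: P_even_def even_form_def Let_def)

(* In the odd case the constant of the theorem equals F_p(0) F_p(1). *)
lemma odd_constant:
  "((2 * Suc p) choose Suc p) * ((3 * Suc p - 1) choose p) = ((Suc p + p) choose p) * ((2*p + p + 2) choose Suc p)"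
proof -
  have "Suc (Suc p + p) = 2 * Suc p" by simp
  then have "2 * Suc p * ((Suc p + p) choose p) = ((2 * Suc p) choose Suc p) * Suc p"
    using Suc_times_binomial_eq[of "Suc p + p" p] by (simp only:)
  then have central: "(2 * Suc p) choose Suc p = 2 * ((Suc p + p) choose p)"
    by (metis mult.commute mult.assoc nat_mult_eq_cancel1 zero_less_Suc)
  have "Suc p * ((2*p + p + 2) choose Suc p) = Suc p * (2 * ((3 * Suc p - 1) choose p))"
    using choose_absorb_bottom[of p "2 * Suc p"] by (simp add: ac_simps del: binomial_Suc_Suc)
  then have "(2*p + p + 2) choose Suc p = 2 * ((3 * Suc p - 1) choose p)"
    by (simp only: nat_mult_eq_cancel1 zero_less_Suc)
  with central show ?thesis by (simp only: ac_simps)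
qed

(* Odd case on the line A = 1: by the splitting, the expression is +-(F(t)F(1-t) - S(t)S(1-t) - K). *)
lemma odd_form_dehomogenized:
  fixes t :: "'a::{idom,ring_char_0}"
  shows "odd_form (Suc p) 1 (-t) (-(1 - t)) = 0"
proof -
  let ?Q = "polyDab p (Suc p) p" and ?u = "\<lambda>x. polyDab p (Suc p) p 1 (-x)"
  let ?K = "of_nat ((Suc p + p) choose p) * of_nat ((2*p + p + 2) choose Suc p) :: 'a"
  have hyp: "hyp_poly p p x = ?u x + dual_poly p p x" for x :: 'a
    by (simp add: hyp_poly_def polyDab_one_neg_extend dual_poly_reflected hyp_coeff_split_odd
        sum.distrib algebra_simps)
  have K_eq: "(of_nat ((2 * Suc p) choose Suc p) * of_nat ((3 * Suc p - 1) choose p) :: 'a) = ?K"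
    by (simp only: odd_constant flip: of_nat_mult)
  have "odd_form (Suc p) 1 (-t) (-(1 - t))
      = (-1)^Suc p * (?u t * ?u (1 - t) - ?K)
        + ((-t) * ?Q (-t) 1) * ?u (1 - t) + ((-(1 - t)) * ?Q (-(1 - t)) 1) * ?u t"
    unfolding odd_form_def diff_Suc_1 power_one mult_1_right mult_1_left mult.assoc K_eq
    by (simp add: algebra_simps del: binomial_Suc_Suc)
  also have "\<dots> = (-1)^Suc p * ((hyp_poly p p t * hyp_poly p p (1 - t)
      - dual_poly p p t * dual_poly p p (1 - t)) - ?K)"
    unfolding polyDab_neg_one_dual hyp by (simp add: algebra_simps)
  also have "\<dots> = 0" by (simp add: hyp_reflection)
  finally show ?thesis .
qed

lemma even_form_dehomogenized:
  fixes t :: "'a::{idom,ring_char_0}"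
  shows "even_form (Suc p) 1 (-t) (-(1 - t)) = 0"
proof -
  let ?R = "polyDab p (Suc p) (Suc p)" and ?q = "\<lambda>x. polyDab (Suc p) (Suc p) (Suc p) 1 (-x)"
  let ?K = "of_nat ((Suc p + Suc p) choose Suc p) * of_nat ((2*p + Suc p + 2) choose Suc p) :: 'a"
  have K_eq: "(of_nat ((2 * Suc p) choose Suc p) * of_nat ((3 * Suc p) choose Suc p) :: 'a) = ?K"
  proof -
    have "2 * Suc p = Suc p + Suc p" "3 * Suc p = 2*p + Suc p + 2" by simp_all
    then show ?thesis by (simp only: flip: of_nat_mult)
  qed
  have split: "?q x = hyp_poly p (Suc p) x + dual_poly p (Suc p) x" for x :: 'a
    by (simp add: hyp_poly_def polyDab_one_neg dual_poly_reflected dab_coeff_split_even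
        sum.distrib algebra_simps)
  have "even_form (Suc p) 1 (-t) (-(1 - t))
      = (-1)^Suc p * (?K - ?q t * ?q (1 - t))
        + ((-t) * ?R (-t) 1) * ?q (1 - t) + ((-(1 - t)) * ?R (-(1 - t)) 1) * ?q t"
    unfolding even_form_def diff_Suc_1 power_one mult_1_right mult.assoc K_eq
    by (simp add: algebra_simps del: binomial_Suc_Suc)
  also have "\<dots> = (-1)^Suc p * (?K - (hyp_poly p (Suc p) t * hyp_poly p (Suc p) (1 - t)
      - dual_poly p (Suc p) t * dual_poly p (Suc p) (1 - t)))"
    unfolding polyDab_neg_one_dual split by (simp add: algebra_simps)
  also have "\<dots> = 0" by (simp add: hyp_reflection)
  finally show ?thesis .
qed

lemma polyDab_scale: "polyDab d a b (A * X) (A * Y) = A^d * polyDab d a b X (Y::'a::comm_ring_1)"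
  unfolding polyDab_def sum_distrib_left
proof (rule sum.cong)
  fix i assume "i \<in> {0..d}"
  then have "A^(d - i) * A^i = A^d" by (simp flip: power_add)
  moreover have "(A * X)^(d - i) * (A * Y)^i = (A^(d - i) * A^i) * (X^(d - i) * Y^i)"
    by (simp only: power_mult_distrib ac_simps)
  ultimately have "(A * X)^(d - i) * (A * Y)^i = A^d * (X^(d - i) * Y^i)"
    by simp
  then show "(-1)^i * of_nat ((a + d - i) choose a) * of_nat ((b + i) choose b) * (A * X)^(d - i) * (A * Y)^i
      = A^d * ((-1)^i * of_nat ((a + d - i) choose a) * of_nat ((b + i) choose b) * X^(d - i) * Y^i)"
    by (simp only: mult.assoc) (simp only: ac_simps)
qed simp

lemma odd_form_scale:
  "odd_form (Suc p) (A * X) (A * Y) (A * Z) = A^(2*p + 1) * odd_form (Suc p) X Y (Z::'a::comm_ring_1)"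
  by (simp add: odd_form_def polyDab_scale power_mult power2_eq_square algebra_simps)

lemma even_form_scale:
  "even_form (Suc p) (A * X) (A * Y) (A * Z) = A^(2*p + 2) * even_form (Suc p) X Y (Z::'a::comm_ring_1)"
  by (simp add: even_form_def polyDab_scale power_mult power2_eq_square algebra_simps)

(* Over a field of characteristic zero both expressions vanish on A + B + C = 0 when A is
   nonzero: rescale by A to reach the point (1, -t, -(1-t)), t = -B/A. *)
lemma forms_vanish_field:
  fixes A B C :: "'a::{field,ring_char_0}"
  assumes "A \<noteq> 0" and "A + B + C = 0"
  shows "odd_form (Suc p) A B C = 0 \<and> even_form (Suc p) A B C = 0"
proof -
  define t where "t = - B / A"
  have "C = - A - B" using assms(2) by (simp add: algebra_simps eq_neg_iff_add_eq_0)
  then have "B = A * (-t)" "C = A * (-(1 - t))"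
    using assms(1) by (simp_all add: t_def algebra_simps)
  then have "odd_form (Suc p) A B C = odd_form (Suc p) (A * 1) (A * (-t)) (A * (-(1 - t)))"
    and "even_form (Suc p) A B C = even_form (Suc p) (A * 1) (A * (-t)) (A * (-(1 - t)))"
    by simp_all
  then show ?thesis
    by (simp only: odd_form_scale even_form_scale odd_form_dehomogenized even_form_dehomogenized
        mult_zero_right simp_thms)
qed

context
  fixes h :: "'a::comm_ring_1 \<Rightarrow> 'b::comm_ring_1"
  assumes hom_add: "\<And>x y. h (x + y) = h x + h y"
    and hom_mult: "\<And>x y. h (x * y) = h x * h y"
    and hom_one: "h 1 = 1"
begin

lemma hom_zero: "h 0 = 0"
  using hom_add[of 0 0] by simp

lemma hom_uminus: "h (- x) = - h x"
  using hom_add[of x "- x"] by (simp add: hom_zero eq_neg_iff_add_eq_0 add.commute)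

lemma hom_of_nat: "h (of_nat n) = of_nat n"
  by (induction n) (simp_all add: hom_zero hom_add hom_one)

lemma hom_power: "h (x ^ n) = h x ^ n"
  by (induction n) (simp_all add: hom_one hom_mult)

lemma hom_sum: "h (sum f S) = (\<Sum>i\<in>S. h (f i))"
  by (induction S rule: infinite_finite_induct) (simp_all add: hom_zero hom_add)

lemma hom_polyDab: "h (polyDab d a b X Y) = polyDab d a b (h X) (h Y)"
  by (simp add: polyDab_def hom_sum hom_mult hom_power hom_uminus hom_one hom_of_nat)

lemma hom_forms:
  "h (odd_form \<delta> A B C) = odd_form \<delta> (h A) (h B) (h C)"
  "h (even_form \<delta> A B C) = even_form \<delta> (h A) (h B) (h C)"
  unfolding odd_form_def even_form_def
  by (simp_all only: hom_add hom_mult hom_power hom_uminus hom_one hom_of_nat hom_polyDab)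

end

instance fract :: ("{idom,ring_char_0}") ring_char_0
proof
  show "inj (of_nat :: nat \<Rightarrow> 'a fract)"
  proof (rule injI)
    fix m n :: nat
    assume "(of_nat m :: 'a fract) = of_nat n"
    then have "Fract (of_nat m :: 'a) 1 = Fract (of_nat n) 1" by (simp add: of_nat_fract)
    then show "m = n" by (simp add: eq_fract)
  qed
qed

lemma forms_vanish:
  fixes A B C :: "'a::{idom,ring_char_0}"
  assumes "A \<noteq> 0" and "A + B + C = 0"
  shows "odd_form (Suc p) A B C = 0 \<and> even_form (Suc p) A B C = 0"
proof -
  let ?h = "\<lambda>x::'a. Fract x 1"
  have hom: "?h (x + y) = ?h x + ?h y" "?h (x * y) = ?h x * ?h y" "?h 1 = 1" for x y
    by (simp_all add: One_fract_def)
  have inj: "?h x = 0 \<Longrightarrow> x = 0" for x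
    by (simp add: Zero_fract_def eq_fract)
  have "?h A \<noteq> 0" using assms(1) inj by blast
  moreover have "?h A + ?h B + ?h C = 0"
    using assms(2) by (simp add: Zero_fract_def)
  ultimately have "odd_form (Suc p) (?h A) (?h B) (?h C) = 0 \<and> even_form (Suc p) (?h A) (?h B) (?h C) = 0"
    by (rule forms_vanish_field)
  then show ?thesis
    using hom_forms[of ?h, OF hom] inj by metis
qed

(* In Z[A][B][C] the divisor A + B + C is the monic linear polynomial
   C + (A + B), so divisibility means vanishing at C = -(A + B); the expressions vanish there
   because A is nonzero in the domain Z[A][B]. *)
theorem lemma3p4:
  fixes \<delta> :: nat
  assumes "\<delta> \<ge> 1"
  shows "(varA + varB + varC) dvd P_odd \<delta> \<and> (varA + varB + varC) dvd P_even \<delta>"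
proof -
  obtain p where \<delta>: "\<delta> = Suc p" using assms by (cases \<delta>) auto
  define a :: "int poly poly" where "a = [:[:0, 1:]:]"
  define b :: "int poly poly" where "b = [:0, 1:]"
  have linear: "varA + varB + varC = [:a + b, 1:]"
    by (simp add: varA_def varB_def varC_def a_def b_def)
  have eval: "poly varA x = a" "poly varB x = b" "poly varC x = x" for x
    by (simp_all add: varA_def varB_def varC_def a_def b_def)
  have "odd_form (Suc p) a b (- (a + b)) = 0 \<and> even_form (Suc p) a b (- (a + b)) = 0"
    by (rule forms_vanish) (simp_all add: a_def)
  then show ?thesis
    unfolding linear dvd_iff_poly_eq_0 P_odd_eq P_even_eq \<delta>
    using hom_forms[of "\<lambda>q. poly q (- (a + b))"] by (simp add: eval)
qed

end
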